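(* A subgrid tensor $\tau$ whose deviatoric part has the form $$\tau^d = \alpha_1^0 S + \frac{\alpha_2^0}{|S|}(S^2)^d + \frac{\alpha_3^0}{|S|}(\Omega^2)^d + \frac{\alpha_4^0}{|S|^2}(\Omega S\Omega)^d + \frac{\alpha_5^0}{|S|}[S,\Omega] + \frac{\alpha_6^0}{|S|^2}[S^2,\Omega] + \frac{\alpha_7^0}{|S|^3}[\Omega S\Omega,\Omega],$$ where $|S|=\sqrt{\operatorname{tr}(S^2)}$ and $\alpha_1^0,\dots,\alpha_7^0$ are arbitrary scalar functions of $$v_1=\frac{\operatorname{tr}(S^3)}{|S|^3},\quad v_2=\frac{\operatorname{tr}(S^2\Omega^2)}{|S|^4},\quad v_3=\frac{\operatorname{tr}(\Omega^2)}{|S|^2},\quad v_4=\frac{\operatorname{tr}(S\Omega^2)}{|S|^3},\quad v_5=\frac{\operatorname{tr}(S^2\Omega^2S\Omega)}{|S|^6},$$ is invariant under the symmetry groups $G_t$, $Gal$, $SO(3)$, $G_p$ and $G_s$ of the Navier–Stokes equations.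
   Context: Consider the filtered incompressible Navier–Stokes equations on $\mathbb R^3$: $\partial_t u + \nabla\cdot(u\otimes u) + \frac1\rho \nabla p - 2\nu\,\nabla\cdot S + \nabla\cdot\tau = 0$, $\nabla\cdot u=0$, where $u(t,x)\in\mathbb R^3$ is the filtered velocity, $p$ the filtered pressure, $\nu>0$ the kinematic viscosity, $\rho>0$ the density, $S=\frac12(\nabla u+\nabla u^T)$ the (filtered) strain-rate tensor, $\Omega=\frac12(\nabla u-\nabla u^T)$ the (filtered) vorticity tensor, and $\tau$ the subgrid tensor, which is modelled as a tensor-valued function of $(S,\Omega)$. The following groups act on $(t,x,u,p)$: time translations $G_t$: $(t,x,u,p)\mapsto(t+\epsilon,x,u,p)$, $\epsilon\in\mathbb R$; the generalized Galilean group $Gal$: $(t,x,u,p)\mapsto(t,x+\alpha(t),u+\dot\alpha(t),p-\rho\,\ddot\alpha(t)\cdot x)$, $\alpha\in C^2(\mathbb R,\mathbb R^3)$; rotations $SO(3)$: $(t,x,u,p)\mapsto(t,Rx,Ru,p)$, $RR^T=I$, $\det R=1$; pressure translations $G_p$: $(t,x,u,p)\mapsto(t,x,u,p+\xi(t))$, $\xi\in C^0(\mathbb R,\mathbb R)$; scalings $G_s$: $(t,x,u,p)\mapsto(e^{2\epsilon}t,e^{\epsilon}x,e^{-\epsilon}u,e^{-2\epsilon}p)$, $\epsilon\in\mathbb R$. A model $\tau$ is called invariant under such a group $G$ if every element of $G$, acting on $(t,x,u,p)$, is a symmetry of the filtered equations with that model (maps solutions to solutions). For a $3\times 3$ matrix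 $Q$, $Q^d=Q-\frac13\operatorname{tr}(Q)\,I$ denotes its deviatoric part, and $[P,Q]=PQ-QP$. *)

theory Defs
  imports "HOL-Analysis.Analysis"
begin

type_synonym vec3 = "real^3"
type_synonym mat3 = "real^3^3"

definition dev :: "mat3 \<Rightarrow> mat3" where
  "dev Q = Q - (trace Q / 3) *\<^sub>R mat 1"

definition comm :: "mat3 \<Rightarrow> mat3 \<Rightarrow> mat3" where
  "comm P Q = P ** Q - Q ** P"

definition normS :: "mat3 \<Rightarrow> real" where
  "normS S = sqrt (trace (S ** S))"

definition outer :: "vec3 \<Rightarrow> mat3" where
  "outer v = (\<chi> i j. v $ i * v $ j)"

type_synonym coeff = "real \<Rightarrow> real \<Rightarrow> real \<Rightarrow> real \<Rightarrow> real \<Rightarrow> real"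

definition tau_model ::
  "coeff \<Rightarrow> coeff \<Rightarrow> coeff \<Rightarrow> coeff \<Rightarrow> coeff \<Rightarrow> coeff \<Rightarrow> coeff \<Rightarrow> mat3 \<Rightarrow> mat3 \<Rightarrow> mat3" where
  "tau_model a1 a2 a3 a4 a5 a6 a7 S W =
    (let n = normS S;
         v1 = trace (S ** S ** S) / n ^ 3;
         v2 = trace (S ** S ** W ** W) / n ^ 4;
         v3 = trace (W ** W) / n ^ 2;
         v4 = trace (S ** W ** W) / n ^ 3;
         v5 = trace (S ** S ** W ** W ** S ** W) / n ^ 6
     in a1 v1 v2 v3 v4 v5 *\<^sub>R S
      + (a2 v1 v2 v3 v4 v5 / n) *\<^sub>R dev (S ** S)
      + (a3 v1 v2 v3 v4 v5 / n) *\<^sub>R dev (W ** W)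
      + (a4 v1 v2 v3 v4 v5 / n ^ 2) *\<^sub>R dev (W ** S ** W)
      + (a5 v1 v2 v3 v4 v5 / n) *\<^sub>R comm S W
      + (a6 v1 v2 v3 v4 v5 / n ^ 2) *\<^sub>R comm (S ** S) W
      + (a7 v1 v2 v3 v4 v5 / n ^ 3) *\<^sub>R comm (W ** S ** W) W)"

text \<open>Velocity gradient: entry (i,j) is the partial derivative of u_i w.r.t. x_j.\<close>
definition grad_u :: "(real \<Rightarrow> vec3 \<Rightarrow> vec3) \<Rightarrow> real \<Rightarrow> vec3 \<Rightarrow> mat3" where
  "grad_u u t x = jacobian (u t) (at x)"

definition strain :: "(real \<Rightarrow> vec3 \<Rightarrow> vec3) \<Rightarrow> real \<Rightarrow> vec3 \<Rightarrow> mat3" where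
  "strain u t x = (1/2) *\<^sub>R (grad_u u t x + transpose (grad_u u t x))"

definition vort :: "(real \<Rightarrow> vec3 \<Rightarrow> vec3) \<Rightarrow> real \<Rightarrow> vec3 \<Rightarrow> mat3" where
  "vort u t x = (1/2) *\<^sub>R (grad_u u t x - transpose (grad_u u t x))"

definition dt :: "(real \<Rightarrow> vec3 \<Rightarrow> vec3) \<Rightarrow> real \<Rightarrow> vec3 \<Rightarrow> vec3" where
  "dt u t x = vector_derivative (\<lambda>s. u s x) (at t)"

definition partial :: "(vec3 \<Rightarrow> real) \<Rightarrow> 3 \<Rightarrow> vec3 \<Rightarrow> real" where
  "partial f j x = frechet_derivative f (at x) (axis j 1)"

definition grad :: "(vec3 \<Rightarrow> real) \<Rightarrow> vec3 \<Rightarrow> vec3" where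
  "grad f x = (\<chi> j. partial f j x)"

definition divM :: "(vec3 \<Rightarrow> mat3) \<Rightarrow> vec3 \<Rightarrow> vec3" where
  "divM M x = (\<chi> i. \<Sum>j\<in>UNIV. partial (\<lambda>y. M y $ i $ j) j x)"

definition NS_sol ::
  "real \<Rightarrow> real \<Rightarrow> (mat3 \<Rightarrow> mat3 \<Rightarrow> mat3) \<Rightarrow> (real \<Rightarrow> vec3 \<Rightarrow> vec3) \<Rightarrow> (real \<Rightarrow> vec3 \<Rightarrow> real) \<Rightarrow> bool" where
  "NS_sol \<nu> \<rho> \<tau> u p \<longleftrightarrow>
    (\<forall>t x.
       (\<lambda>(s, y). u s y) differentiable at (t, x)
     \<and> (\<forall>i j. (\<lambda>y. strain u t y $ i $ j) differentiable at x)
     \<and> (\<forall>i j. (\<lambda>y. \<tau> (strain u t y) (vort u t y) $ i $ j) differentiable at x)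
     \<and> p t differentiable at x
     \<and> trace (grad_u u t x) = 0
     \<and> dt u t x + divM (\<lambda>y. outer (u t y)) x + (1 / \<rho>) *\<^sub>R grad (p t) x
         - (2 * \<nu>) *\<^sub>R divM (strain u t) x
         + divM (\<lambda>y. \<tau> (strain u t y) (vort u t y)) x = 0)"

definition inv_Gt where
  "inv_Gt \<nu> \<rho> \<tau> \<longleftrightarrow> (\<forall>\<epsilon>::real. \<forall>u p. NS_sol \<nu> \<rho> \<tau> u p \<longrightarrow>
     NS_sol \<nu> \<rho> \<tau> (\<lambda>t x. u (t - \<epsilon>) x) (\<lambda>t x. p (t - \<epsilon>) x))"

definition inv_Gal where
  "inv_Gal \<nu> \<rho> \<tau> \<longleftrightarrow> (\<forall>(\<alpha>::real \<Rightarrow> vec3) \<alpha>' \<alpha>''.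
     (\<forall>t. (\<alpha> has_vector_derivative \<alpha>' t) (at t)) \<and>
     (\<forall>t. (\<alpha>' has_vector_derivative \<alpha>'' t) (at t)) \<and> continuous_on UNIV \<alpha>'' \<longrightarrow>
     (\<forall>u p. NS_sol \<nu> \<rho> \<tau> u p \<longrightarrow>
        NS_sol \<nu> \<rho> \<tau> (\<lambda>t x. u t (x - \<alpha> t) + \<alpha>' t)
                        (\<lambda>t x. p t (x - \<alpha> t) - \<rho> * (\<alpha>'' t \<bullet> (x - \<alpha> t)))))"

definition inv_SO3 where
  "inv_SO3 \<nu> \<rho> \<tau> \<longleftrightarrow> (\<forall>R::mat3. R ** transpose R = mat 1 \<and> det R = 1 \<longrightarrow>
     (\<forall>u p. NS_sol \<nu> \<rho> \<tau> u p \<longrightarrow>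
        NS_sol \<nu> \<rho> \<tau> (\<lambda>t x. R *v u t (transpose R *v x)) (\<lambda>t x. p t (transpose R *v x))))"

definition inv_Gp where
  "inv_Gp \<nu> \<rho> \<tau> \<longleftrightarrow> (\<forall>\<xi>::real \<Rightarrow> real. continuous_on UNIV \<xi> \<longrightarrow>
     (\<forall>u p. NS_sol \<nu> \<rho> \<tau> u p \<longrightarrow> NS_sol \<nu> \<rho> \<tau> u (\<lambda>t x. p t x + \<xi> t)))"

definition inv_Gs where
  "inv_Gs \<nu> \<rho> \<tau> \<longleftrightarrow> (\<forall>\<epsilon>::real. \<forall>u p. NS_sol \<nu> \<rho> \<tau> u p \<longrightarrow>
     NS_sol \<nu> \<rho> \<tau> (\<lambda>t x. exp (- \<epsilon>) *\<^sub>R u (exp (-2 * \<epsilon>) * t) (exp (- \<epsilon>) *\<^sub>R x))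
                     (\<lambda>t x. exp (-2 * \<epsilon>) * p (exp (-2 * \<epsilon>) * t) (exp (- \<epsilon>) *\<^sub>R x)))"

end

theory Submission
  imports Defs
begin

(* Each of the five groups acts by a substitution
     u'(s, y) = A u(c s + m, A^T y - beta s) + gamma s,
     p'(s, y) = c p(c s + m, A^T y - beta s) - rho (gamma' s . y) + r s
   with A^T A = c I and beta' = A^T gamma: A = I for time shifts, Galilean boosts
   (beta = alpha, gamma = alpha') and pressure shifts, A = R for rotations, and
   A = e^-eps I, c = e^-2eps for scalings. By the chain rule grad u' = A (grad u) A^T, so S and
   Omega transform by the congruence X |-> A X A^T, which multiplies products and traces by c.
   If the model commutes with this congruence, every term of the momentum equation for
   (u', p') is c A times the corresponding term for (u, p): the drift beta' = A^T gamma cancels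
   the transport of the added velocity gamma, and the pressure term -rho gamma' . y balances its
   acceleration. The model commutes with conformal congruences because it is built from
   products, traces and deviatoric parts of S and Omega, and the normalisation by |S| makes the
   invariants v_i homogeneous of degree 0 and every term homogeneous of degree 1. *)

(* Keep transpose A *v x, the form in which the groups act, instead of x v* A. *)
declare transpose_matrix_vector [simp del]

section \<open>Congruences and the subgrid model\<close>

lemma matrix_add_rdistrib: "((A::'a::semiring_1^'n^'m) + B) ** C = A ** C + B ** C"
  by (simp add: matrix_matrix_mult_def vec_eq_iff sum.distrib algebra_simps)

lemma matrix_diff_ldistrib: "(A::'a::ring_1^'n^'m) ** (B - C) = A ** B - A ** C"
  by (simp add: matrix_matrix_mult_def vec_eq_iff sum_subtractf algebra_simps)

lemma matrix_diff_rdistrib: "((A::'a::ring_1^'n^'m) - B) ** C = A ** C - B ** C"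
  by (simp add: matrix_matrix_mult_def vec_eq_iff sum_subtractf algebra_simps)

(* Not a simp rule: it rewrites mat 1 to 1 *R mat 1. *)
lemma mat_scaleR: "(mat a :: real^'n^'n) = a *\<^sub>R mat 1"
  by (simp add: vec_eq_iff mat_def)

lemma matrix_mul_mat_left: "mat a ** (X::real^'n^'n) = a *\<^sub>R X"
  by (subst mat_scaleR) (simp flip: scalar_matrix_assoc)

lemma matrix_mul_mat_right: "(X::real^'n^'n) ** mat a = a *\<^sub>R X"
  by (subst mat_scaleR) (simp add: matrix_scalar_ac)

lemma matrix_vector_mul_mat: "mat a *v (v::real^'n) = a *\<^sub>R v"
  by (subst mat_scaleR) (simp flip: scaleR_matrix_vector_assoc)

lemma trace_scaleR: "trace (a *\<^sub>R (X::real^'n^'n)) = a * trace X"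
  by (simp add: trace_def sum_distrib_left)

lemma dev_scaleR: "dev (a *\<^sub>R X) = a *\<^sub>R dev X"
  by (simp add: dev_def trace_scaleR algebra_simps)

lemma comm_scaleR_left: "comm (a *\<^sub>R X) Y = a *\<^sub>R comm X Y"
  by (simp add: comm_def matrix_scalar_ac scaleR_diff_right flip: scalar_matrix_assoc)

definition congruence :: "real^'n^'n \<Rightarrow> real^'n^'n \<Rightarrow> real^'n^'n" where
  "congruence A X = A ** X ** transpose A"

lemma congruence_add: "congruence A (X + Y) = congruence A X + congruence A Y"
  by (simp add: congruence_def matrix_add_ldistrib matrix_add_rdistrib)

lemma congruence_diff: "congruence A (X - Y) = congruence A X - congruence A Y"
  by (simp add: congruence_def matrix_diff_ldistrib matrix_diff_rdistrib)

lemma congruence_scaleR: "congruence A (a *\<^sub>R X) = a *\<^sub>R congruence A X"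
  by (simp add: congruence_def matrix_scalar_ac flip: scalar_matrix_assoc)

lemma congruence_transpose: "transpose (congruence A X) = congruence A (transpose X)"
  by (simp add: congruence_def matrix_transpose_mul matrix_mul_assoc)

lemma bounded_linear_congruence: "bounded_linear (congruence (A::real^'n^'n))"
  by (simp add: linear_conv_bounded_linear[symmetric] linearI congruence_add congruence_scaleR)

lemma congruence_mult:
  assumes "transpose A ** A = mat c"
  shows "congruence A X ** congruence A Y = c *\<^sub>R congruence A (X ** Y)"
proof -
  have "congruence A X ** congruence A Y = A ** X ** (transpose A ** A) ** Y ** transpose A"
    by (simp add: congruence_def matrix_mul_assoc)
  also have "\<dots> = c *\<^sub>R congruence A (X ** Y)"
    by (simp add: assms congruence_def matrix_mul_mat_right matrix_scalar_ac scalar_matrix_assoc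
        matrix_mul_assoc)
  finally show ?thesis .
qed

lemma trace_congruence:
  assumes "transpose A ** A = mat c"
  shows "trace (congruence A X) = c * trace X"
  by (metis assms congruence_def matrix_mul_assoc matrix_mul_mat_left trace_mul_sym trace_scaleR)

lemma conformal_matrix_transpose:
  fixes A :: "real^'n^'n"
  assumes "transpose A ** A = mat c" and "c \<noteq> 0"
  shows "A ** transpose A = mat c"
proof -
  have "((1 / c) *\<^sub>R transpose A) ** A = mat 1"
    using assms by (simp add: mat_scaleR[of c] flip: scalar_matrix_assoc)
  then have "A ** ((1 / c) *\<^sub>R transpose A) = mat 1"
    by (rule matrix_left_right_inverse[THEN iffD1])
  then have "c *\<^sub>R (A ** ((1 / c) *\<^sub>R transpose A)) = mat c"
    by (simp add: mat_scaleR[of c])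
  then show ?thesis
    using assms(2) by (simp add: matrix_scalar_ac flip: scalar_matrix_assoc)
qed

context
  fixes A :: mat3 and c :: real
  assumes conformal: "transpose A ** A = mat c" and pos: "c > 0"
begin

lemma dev_congruence: "dev (congruence A X) = congruence A (dev X)"
proof -
  have "congruence A (mat 1) = c *\<^sub>R mat 1"
    using conformal_matrix_transpose[OF conformal] pos
    by (simp add: congruence_def mat_scaleR[of c])
  then show ?thesis
    by (simp add: dev_def congruence_diff congruence_scaleR trace_congruence[OF conformal])
qed

lemma comm_congruence: "comm (congruence A X) (congruence A Y) = c *\<^sub>R congruence A (comm X Y)"
  by (simp add: comm_def congruence_mult[OF conformal] congruence_diff scaleR_diff_right)

lemma normS_congruence: "normS (congruence A X) = c * normS X"
  using pos
  by (simp add: normS_def congruence_mult[OF conformal] trace_scaleR trace_congruence[OF conformal]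
      real_sqrt_mult)

lemma tau_model_congruence:
  "tau_model a1 a2 a3 a4 a5 a6 a7 (congruence A S) (congruence A W)
     = congruence A (tau_model a1 a2 a3 a4 a5 a6 a7 S W)"
  \<comment> \<open>expanding the powers of c * normS S lets the factors c cancel\<close>
  using pos
  by (simp add: tau_model_def Let_def congruence_mult[OF conformal] trace_congruence[OF conformal]
      trace_scaleR normS_congruence dev_congruence comm_congruence congruence_add congruence_scaleR
      dev_scaleR comm_scaleR_left matrix_scalar_ac power_mult_distrib numeral_eq_Suc mult.assoc
      flip: scalar_matrix_assoc)

end

lemma congruence_mat: "congruence (mat a) X = (a * a) *\<^sub>R X"
  by (simp add: congruence_def matrix_mul_mat_left matrix_mul_mat_right)

lemma matrix_mul_mat_mat: "mat a ** (mat b :: real^'n^'n) = mat (a * b)"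
  by (simp add: matrix_mul_mat_left) (simp add: vec_eq_iff mat_def)

lemma tau_model_orthogonal_congruence:
  assumes "orthogonal_matrix R"
  shows "tau_model a1 a2 a3 a4 a5 a6 a7 (congruence R S) (congruence R W)
       = congruence R (tau_model a1 a2 a3 a4 a5 a6 a7 S W)"
  using tau_model_congruence[of R 1] assms by (simp add: orthogonal_matrix_def)

lemma tau_model_scaleR:
  assumes "c > 0"
  shows "tau_model a1 a2 a3 a4 a5 a6 a7 (c *\<^sub>R S) (c *\<^sub>R W)
       = c *\<^sub>R tau_model a1 a2 a3 a4 a5 a6 a7 S W"
  using tau_model_congruence[of "mat (sqrt c)" c] assms
  by (simp add: congruence_mat matrix_mul_mat_mat)

section \<open>Divergences and gradients of substituted fields\<close>

lemma mat_differentiable_iff: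
  fixes M :: "'a::real_normed_vector \<Rightarrow> mat3"
  shows "M differentiable (at x) \<longleftrightarrow> (\<forall>i j. (\<lambda>y. M y $ i $ j) differentiable (at x))"
  by (subst differentiable_componentwise_within) (auto simp: Basis_vec_def inner_axis)

lemma linear_eq_sum_axis:
  fixes L :: "real^'n \<Rightarrow> 'b::real_vector"
  assumes "linear L"
  shows "L h = (\<Sum>k\<in>UNIV. h$k *\<^sub>R L (axis k 1))"
proof -
  have "h = (\<Sum>k\<in>UNIV. h$k *\<^sub>R axis k 1)"
    using basis_expansion[of h] by (simp add: scalar_mult_eq_scaleR)
  then have "L h = L (\<Sum>k\<in>UNIV. h$k *\<^sub>R axis k 1)" by simp
  also have "\<dots> = (\<Sum>k\<in>UNIV. h$k *\<^sub>R L (axis k 1))"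
    by (simp add: linear_sum[OF assms] linear_scale[OF assms])
  finally show ?thesis .
qed

definition deriv_div :: "(vec3 \<Rightarrow> mat3) \<Rightarrow> vec3" where
  "deriv_div L = (\<chi> i. \<Sum>j\<in>UNIV. L (axis j 1) $ i $ j)"

lemma divM_eq_deriv_div:
  assumes "(M has_derivative M') (at x)"
  shows "divM M x = deriv_div M'"
proof -
  have "((\<lambda>y. M y $ i $ j) has_derivative (\<lambda>h. M' h $ i $ j)) (at x)" for i j
    using bounded_linear.has_derivative[OF bounded_linear_vec_nth
        bounded_linear.has_derivative[OF bounded_linear_vec_nth assms]] .
  then have "frechet_derivative (\<lambda>y. M y $ i $ j) (at x) = (\<lambda>h. M' h $ i $ j)" for i j
    by (simp add: frechet_derivative_at[symmetric])
  then show ?thesis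
    by (simp add: divM_def deriv_div_def partial_def)
qed

lemma deriv_div_congruence:
  assumes L: "linear L" and conformal: "transpose A ** A = mat c"
  shows "deriv_div (\<lambda>h. congruence A (L (transpose A *v h))) = c *\<^sub>R (A *v deriv_div L)"
proof -
  have col: "(\<Sum>j\<in>UNIV. A$j$k * A$j$b) * y = (if k = b then c * y else 0)" for k b y
    using arg_cong[OF conformal, of "\<lambda>M. M $ k $ b"]
    by (simp add: matrix_matrix_mult_def transpose_def mat_def)
  have L_row: "L (transpose A *v axis j 1) = (\<Sum>k\<in>UNIV. A$j$k *\<^sub>R L (axis k 1))" for j
    by (subst linear_eq_sum_axis[OF L])
       (simp add: transpose_def matrix_vector_mult_def axis_def if_distrib cong: if_cong)
  have "deriv_div (\<lambda>h. congruence A (L (transpose A *v h))) $ i = (c *\<^sub>R (A *v deriv_div L)) $ i"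
    for i
  proof -
    have "deriv_div (\<lambda>h. congruence A (L (transpose A *v h))) $ i
        = (\<Sum>j\<in>UNIV. congruence A (\<Sum>k\<in>UNIV. A$j$k *\<^sub>R L (axis k 1)) $ i $ j)"
      by (simp only: deriv_div_def vec_lambda_beta L_row)
    also have "\<dots> = (\<Sum>j\<in>UNIV. \<Sum>b\<in>UNIV. \<Sum>a\<in>UNIV. \<Sum>k\<in>UNIV.
        A$j$k * A$j$b * (A$i$a * L (axis k 1) $a$b))"
      by (simp add: congruence_def matrix_matrix_mult_def transpose_def
          sum_distrib_left sum_distrib_right sum_component mult_ac)
    also have "\<dots> = (\<Sum>b\<in>UNIV. \<Sum>a\<in>UNIV. \<Sum>k\<in>UNIV. \<Sum>j\<in>UNIV.
        A$j$k * A$j$b * (A$i$a * L (axis k 1) $a$b))"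
      by (subst sum.swap, rule sum.cong[OF refl], subst sum.swap, rule sum.cong[OF refl],
          rule sum.swap)
    also have "\<dots> = (\<Sum>b\<in>UNIV. \<Sum>a\<in>UNIV. \<Sum>k\<in>UNIV.
        (\<Sum>j\<in>UNIV. A$j$k * A$j$b) * (A$i$a * L (axis k 1) $a$b))"
      by (simp only: sum_distrib_right)
    also have "\<dots> = (\<Sum>b\<in>UNIV. \<Sum>a\<in>UNIV. c * (A$i$a * L (axis b 1) $a$b))"
      by (simp add: col)
    also have "\<dots> = (c *\<^sub>R (A *v deriv_div L)) $ i"
      by (simp add: deriv_div_def matrix_vector_mult_def sum_distrib_left) (rule sum.swap)
    finally show ?thesis .
  qed
  then show ?thesis by (simp add: vec_eq_iff)
qed

lemma divM_outer:
  assumes "(f has_derivative f') (at x)"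
  shows "divM (\<lambda>y. outer (f y)) x = matrix f' *v f x + trace (matrix f') *\<^sub>R f x"
proof -
  have component: "((\<lambda>y. f y $ i) has_derivative (\<lambda>h. f' h $ i)) (at x)" for i
    using bounded_linear.has_derivative[OF bounded_linear_vec_nth assms] .
  have "((\<lambda>y. outer (f y) $ i $ j) has_derivative (\<lambda>h. f x $ i * f' h $ j + f' h $ i * f x $ j))
      (at x)" for i j
    unfolding outer_def using has_derivative_mult[OF component component] by simp
  then have "frechet_derivative (\<lambda>y. outer (f y) $ i $ j) (at x)
      = (\<lambda>h. f x $ i * f' h $ j + f' h $ i * f x $ j)" for i j
    by (rule frechet_derivative_at[symmetric])
  then have "divM (\<lambda>y. outer (f y)) x $ i
      = (\<Sum>j\<in>UNIV. f x $ i * f' (axis j 1) $ j + f' (axis j 1) $ i * f x $ j)" for i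
    by (simp add: divM_def partial_def)
  then show ?thesis
    by (simp add: vec_eq_iff sum.distrib sum_distrib_left sum_distrib_right matrix_def
        matrix_vector_mult_def trace_def mult.commute)
qed

lemma has_derivative_eq_inner_grad:
  assumes "(f has_derivative f') (at x)"
  shows "f' h = grad f x \<bullet> h"
proof -
  have "grad f x = (\<chi> k. f' (axis k 1))"
    by (simp add: grad_def partial_def frechet_derivative_at[OF assms, symmetric])
  moreover have "f' h = (\<Sum>k\<in>UNIV. h$k *\<^sub>R f' (axis k 1))"
    by (rule linear_eq_sum_axis[OF has_derivative_linear[OF assms]])
  ultimately show ?thesis
    by (simp add: inner_vec_def mult.commute)
qed

lemma grad_eqI:
  assumes "(f has_derivative (\<lambda>h. g \<bullet> h)) (at x)"
  shows "grad f x = g"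
  by (simp add: vec_eq_iff grad_def partial_def frechet_derivative_at[OF assms, symmetric] inner_axis)

lemma joint_derivative_partials:
  assumes F: "((\<lambda>(s, y). u s y) has_derivative F') (at (t, z))"
  shows "(u t has_derivative (\<lambda>h. F' (0, h))) (at z)"
    and "grad_u u t z *v h = F' (0, h)"
    and "dt u t z = F' (1, 0)"
proof -
  show space: "(u t has_derivative (\<lambda>h. F' (0, h))) (at z)"
    using diff_chain_at[OF has_derivative_Pair[OF has_derivative_const has_derivative_ident] F]
    by (simp add: o_def)
  then show "grad_u u t z *v h = F' (0, h)"
    by (simp add: grad_u_def jacobian_def frechet_derivative_at[OF space, symmetric]
        matrix_works has_derivative_linear[OF space])
  have time: "((\<lambda>s. u s z) has_derivative (\<lambda>a. F' (a, 0))) (at t)"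
    using diff_chain_at[OF has_derivative_Pair[OF has_derivative_ident has_derivative_const] F]
    by (simp add: o_def)
  have "(\<lambda>a. F' (a, 0)) = (\<lambda>a. a *\<^sub>R F' (1, 0))"
  proof
    show "F' (a, 0) = a *\<^sub>R F' (1, 0)" for a
      using linear_scale[OF has_derivative_linear[OF F], of a "(1, 0)"] by simp
  qed
  then have "((\<lambda>s. u s z) has_vector_derivative F' (1, 0)) (at t)"
    using has_derivative_eq_rhs[OF time] by (simp add: has_vector_derivative_def)
  then show "dt u t z = F' (1, 0)"
    unfolding dt_def by (rule vector_derivative_at)
qed

lemma has_derivative_grad_u:
  assumes "(\<lambda>(s, y). u s y) differentiable at (t, z)"
  shows "(u t has_derivative (\<lambda>h. grad_u u t z *v h)) (at z)"
proof -
  obtain F' where "((\<lambda>(s, y). u s y) has_derivative F') (at (t, z))"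
    using assms by (auto simp: differentiable_def)
  from joint_derivative_partials(1,2)[OF this] show ?thesis by simp
qed

lemma has_derivative_affine_substitution:
  fixes B :: "real^'n^'m"
  assumes "(f has_derivative f') (at (B *v x - b))"
  shows "((\<lambda>y. f (B *v y - b)) has_derivative (\<lambda>h. f' (B *v h))) (at x)"
proof -
  have "((\<lambda>y. B *v y - b) has_derivative (\<lambda>h. B *v h - 0)) (at x)"
    by (intro has_derivative_diff bounded_linear_imp_has_derivative matrix_vector_mul_bounded_linear
        has_derivative_const)
  from diff_chain_at[OF this[simplified] assms] show ?thesis by (simp add: o_def)
qed

lemma has_derivative_velocity_substitution:
  fixes A :: "real^'k^'l" and J :: "real^'m^'k" and B :: "real^'n^'m"
  assumes "(v has_derivative (\<lambda>h. J *v h)) (at (B *v x - b))"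
  shows "((\<lambda>y. A *v v (B *v y - b) + w) has_derivative (\<lambda>h. (A ** J ** B) *v h)) (at x)"
  using has_derivative_add_const[OF bounded_linear.has_derivative[OF matrix_vector_mul_bounded_linear,
        OF has_derivative_affine_substitution[OF assms]]]
  by (simp add: matrix_vector_mul_assoc matrix_mul_assoc)

lemma divM_congruence_substitution:
  assumes conformal: "transpose A ** A = mat c"
    and M: "M differentiable at (transpose A *v x - b)"
  shows "(\<lambda>y. congruence A (M (transpose A *v y - b))) differentiable at x"
    and "divM (\<lambda>y. congruence A (M (transpose A *v y - b))) x
       = c *\<^sub>R (A *v divM M (transpose A *v x - b))"
proof -
  obtain M' where M': "(M has_derivative M') (at (transpose A *v x - b))"
    using M by (auto simp: differentiable_def)
  have D: "((\<lambda>y. congruence A (M (transpose A *v y - b))) has_derivative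
      (\<lambda>h. congruence A (M' (transpose A *v h)))) (at x)"
    by (rule bounded_linear.has_derivative[OF bounded_linear_congruence
          has_derivative_affine_substitution[OF M']])
  then show "(\<lambda>y. congruence A (M (transpose A *v y - b))) differentiable at x"
    by (rule differentiableI)
  show "divM (\<lambda>y. congruence A (M (transpose A *v y - b))) x
      = c *\<^sub>R (A *v divM M (transpose A *v x - b))"
    by (simp only: divM_eq_deriv_div[OF D] divM_eq_deriv_div[OF M']
        deriv_div_congruence[OF has_derivative_linear[OF M'] conformal])
qed

lemma grad_pressure_substitution:
  fixes B :: mat3
  assumes "p differentiable at (B *v x - b)"
  shows "(\<lambda>y. k * p (B *v y - b) + q \<bullet> y + r) differentiable at x"
    and "grad (\<lambda>y. k * p (B *v y - b) + q \<bullet> y + r) x = k *\<^sub>R (transpose B *v grad p (B *v x - b)) + q"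
proof -
  obtain P where P: "(p has_derivative P) (at (B *v x - b))"
    using assms by (auto simp: differentiable_def)
  have "((\<lambda>y. k * p (B *v y - b) + q \<bullet> y + r) has_derivative (\<lambda>h. k * P (B *v h) + q \<bullet> h + 0)) (at x)"
    by (intro has_derivative_add has_derivative_mult_right has_derivative_affine_substitution[OF P]
        has_derivative_inner_right has_derivative_ident has_derivative_const)
  moreover have "(\<lambda>h. k * P (B *v h) + q \<bullet> h + 0)
      = (\<lambda>h. (k *\<^sub>R (transpose B *v grad p (B *v x - b)) + q) \<bullet> h)"
    by (simp add: has_derivative_eq_inner_grad[OF P] inner_add_left transpose_matrix_vector
        dot_lmul_matrix)
  ultimately have D: "((\<lambda>y. k * p (B *v y - b) + q \<bullet> y + r) has_derivative
      (\<lambda>h. (k *\<^sub>R (transpose B *v grad p (B *v x - b)) + q) \<bullet> h)) (at x)"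
    by simp
  then show "(\<lambda>y. k * p (B *v y - b) + q \<bullet> y + r) differentiable at x"
    by (rule differentiableI)
  from D show "grad (\<lambda>y. k * p (B *v y - b) + q \<bullet> y + r) x = k *\<^sub>R (transpose B *v grad p (B *v x - b)) + q"
    by (rule grad_eqI)
qed

lemma has_derivative_joint_substitution:
  fixes A B :: mat3
  assumes F: "((\<lambda>(s, y). u s y) has_derivative F') (at (k * t + m, B *v x - \<beta> t))"
    and \<beta>: "(\<beta> has_vector_derivative \<beta>') (at t)"
    and \<gamma>: "(\<gamma> has_vector_derivative \<gamma>') (at t)"
  shows "((\<lambda>(s, y). A *v u (k * s + m) (B *v y - \<beta> s) + \<gamma> s) has_derivative
      (\<lambda>(s, h). A *v F' (k * s, B *v h - s *\<^sub>R \<beta>') + s *\<^sub>R \<gamma>')) (at (t, x))"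
proof -
  have d_fst: "((\<lambda>w::real \<times> vec3. fst w) has_derivative fst) (at (t, x))"
    and d_snd: "((\<lambda>w::real \<times> vec3. snd w) has_derivative snd) (at (t, x))"
    by (auto intro: has_derivative_fst has_derivative_snd has_derivative_ident)
  have \<beta>_fst: "((\<lambda>w. \<beta> (fst w)) has_derivative (\<lambda>w. fst w *\<^sub>R \<beta>')) (at (t, x))"
    and \<gamma>_fst: "((\<lambda>w. \<gamma> (fst w)) has_derivative (\<lambda>w. fst w *\<^sub>R \<gamma>')) (at (t, x))"
    using has_derivative_compose[OF d_fst] \<beta> \<gamma> by (auto simp: has_vector_derivative_def)
  have "((\<lambda>w. (k * fst w + m, B *v snd w - \<beta> (fst w))) has_derivative
      (\<lambda>w. (k * fst w, B *v snd w - fst w *\<^sub>R \<beta>'))) (at (t, x))"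
    by (intro has_derivative_Pair has_derivative_add_const has_derivative_mult_right d_fst
        has_derivative_diff \<beta>_fst bounded_linear.has_derivative[OF matrix_vector_mul_bounded_linear d_snd])
  from has_derivative_compose[OF this, of "\<lambda>(s, y). u s y" F'] F
  have "((\<lambda>w. u (k * fst w + m) (B *v snd w - \<beta> (fst w))) has_derivative
      (\<lambda>w. F' (k * fst w, B *v snd w - fst w *\<^sub>R \<beta>'))) (at (t, x))"
    by simp
  from has_derivative_add[OF bounded_linear.has_derivative[OF matrix_vector_mul_bounded_linear this] \<gamma>_fst]
  show ?thesis
    by (simp add: case_prod_beta')
qed

lemma dt_substitution:
  fixes A B :: mat3
  assumes F: "(\<lambda>(s, y). u s y) differentiable at (k * t + m, B *v x - \<beta> t)"
    and \<beta>: "(\<beta> has_vector_derivative \<beta>') (at t)"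
    and \<gamma>: "(\<gamma> has_vector_derivative \<gamma>') (at t)"
  shows "(\<lambda>(s, y). A *v u (k * s + m) (B *v y - \<beta> s) + \<gamma> s) differentiable at (t, x)"
    and "dt (\<lambda>s y. A *v u (k * s + m) (B *v y - \<beta> s) + \<gamma> s) t x
       = A *v (k *\<^sub>R dt u (k * t + m) (B *v x - \<beta> t) - grad_u u (k * t + m) (B *v x - \<beta> t) *v \<beta>') + \<gamma>'"
proof -
  obtain F' where F': "((\<lambda>(s, y). u s y) has_derivative F') (at (k * t + m, B *v x - \<beta> t))"
    using F by (auto simp: differentiable_def)
  note D = has_derivative_joint_substitution[OF F' \<beta> \<gamma>, of A]
  then show "(\<lambda>(s, y). A *v u (k * s + m) (B *v y - \<beta> s) + \<gamma> s) differentiable at (t, x)"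
    by (rule differentiableI)
  have "F' (k, - \<beta>') = k *\<^sub>R F' (1, 0) - F' (0, \<beta>')"
    using linear_diff[OF has_derivative_linear[OF F'], of "(k, 0)" "(0, \<beta>')"]
      linear_scale[OF has_derivative_linear[OF F'], of k "(1, 0)"]
    by simp
  with joint_derivative_partials(3)[OF D] joint_derivative_partials(2,3)[OF F']
  show "dt (\<lambda>s y. A *v u (k * s + m) (B *v y - \<beta> s) + \<gamma> s) t x
      = A *v (k *\<^sub>R dt u (k * t + m) (B *v x - \<beta> t) - grad_u u (k * t + m) (B *v x - \<beta> t) *v \<beta>') + \<gamma>'"
    by simp
qed

section \<open>Substitutions preserving the filtered equations\<close>

lemma grad_u_substitution:
  fixes A :: mat3
  assumes "(\<lambda>(s, y). u s y) differentiable at (k * t + m, transpose A *v y - \<beta> t)"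
  shows "grad_u (\<lambda>s y. A *v u (k * s + m) (transpose A *v y - \<beta> s) + \<gamma> s) t y
       = congruence A (grad_u u (k * t + m) (transpose A *v y - \<beta> t))"
proof -
  note D = has_derivative_velocity_substitution[OF has_derivative_grad_u[OF assms], of A "\<gamma> t"]
  show ?thesis
    by (simp add: grad_u_def jacobian_def frechet_derivative_at[OF D, symmetric] congruence_def)
qed

lemma strain_vort_congruence:
  assumes "grad_u u' t' y = congruence A (grad_u u t z)"
  shows "strain u' t' y = congruence A (strain u t z)"
    and "vort u' t' y = congruence A (vort u t z)"
  using assms
  by (simp_all add: strain_def vort_def congruence_transpose congruence_add congruence_diff
      congruence_scaleR)

lemma momentum_residual_congruence:
  fixes A J :: mat3
  assumes conformal: "transpose A ** A = mat c" and "\<rho> \<noteq> 0"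
  shows "(A *v (c *\<^sub>R D - J *v (transpose A *v g)) + g') + congruence A J *v (A *v U + g)
       + (1 / \<rho>) *\<^sub>R (c *\<^sub>R (A *v P) + - \<rho> *\<^sub>R g') - (2 * \<nu>) *\<^sub>R (c *\<^sub>R (A *v DS)) + c *\<^sub>R (A *v DT)
     = c *\<^sub>R (A *v (D + J *v U + (1 / \<rho>) *\<^sub>R P - (2 * \<nu>) *\<^sub>R DS + DT))"
proof -
  have "congruence A J *v (A *v U) = (A ** J) *v ((transpose A ** A) *v U)"
    by (simp add: congruence_def matrix_vector_mul_assoc matrix_mul_assoc)
  also have "\<dots> = c *\<^sub>R (A *v (J *v U))"
    by (simp add: conformal matrix_vector_mul_mat matrix_vector_mul_assoc matrix_vector_mult_scaleR)
  finally have "congruence A J *v (A *v U) = c *\<^sub>R (A *v (J *v U))" .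
  moreover have "congruence A J *v g = A *v (J *v (transpose A *v g))"
    by (simp add: congruence_def matrix_vector_mul_assoc matrix_mul_assoc)
  ultimately show ?thesis
    using \<open>\<rho> \<noteq> 0\<close>
    by (simp add: matrix_vector_right_distrib matrix_vector_mult_diff_distrib matrix_vector_mult_scaleR
        algebra_simps)
qed

lemma divM_outer_trace_free:
  assumes "(f has_derivative (\<lambda>h. J *v h)) (at x)" and "trace J = 0"
  shows "divM (\<lambda>y. outer (f y)) x = J *v f x"
  using divM_outer[OF assms(1)] assms(2) by (simp add: matrix_of_matrix_vector_mul)

locale NS_conformal_change =
  fixes \<nu> \<rho> :: real and \<tau> :: "mat3 \<Rightarrow> mat3 \<Rightarrow> mat3"
    and u :: "real \<Rightarrow> vec3 \<Rightarrow> vec3" and p :: "real \<Rightarrow> vec3 \<Rightarrow> real"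
    and A :: mat3 and c m :: real and \<beta> \<gamma> \<gamma>' :: "real \<Rightarrow> vec3" and r :: "real \<Rightarrow> real"
  assumes sol: "NS_sol \<nu> \<rho> \<tau> u p" and rho: "\<rho> \<noteq> 0"
    and conformal: "transpose A ** A = mat c"
    and \<tau>_congruence: "\<And>S W. \<tau> (congruence A S) (congruence A W) = congruence A (\<tau> S W)"
    and \<beta>: "\<And>s. (\<beta> has_vector_derivative transpose A *v \<gamma> s) (at s)"
    and \<gamma>: "\<And>s. (\<gamma> has_vector_derivative \<gamma>' s) (at s)"
begin

definition u' :: "real \<Rightarrow> vec3 \<Rightarrow> vec3" where
  "u' = (\<lambda>s y. A *v u (c * s + m) (transpose A *v y - \<beta> s) + \<gamma> s)"

definition p' :: "real \<Rightarrow> vec3 \<Rightarrow> real" where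
  "p' = (\<lambda>s y. c * p (c * s + m) (transpose A *v y - \<beta> s) + (- \<rho> *\<^sub>R \<gamma>' s) \<bullet> y + r s)"

lemma
  shows joint_differentiable: "(\<lambda>(s, y). u s y) differentiable at (s, y)"
    and strain_differentiable: "strain u s differentiable at y"
    and \<tau>_differentiable: "(\<lambda>y. \<tau> (strain u s y) (vort u s y)) differentiable at y"
    and pressure_differentiable: "p s differentiable at y"
    and div_free: "trace (grad_u u s y) = 0"
  using sol by (simp_all add: NS_sol_def mat_differentiable_iff)

lemma momentum_equation:
  "dt u s y + grad_u u s y *v u s y + (1 / \<rho>) *\<^sub>R grad (p s) y
     - (2 * \<nu>) *\<^sub>R divM (strain u s) y + divM (\<lambda>y. \<tau> (strain u s y) (vort u s y)) y = 0"
proof -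
  have "dt u s y + divM (\<lambda>y. outer (u s y)) y + (1 / \<rho>) *\<^sub>R grad (p s) y
      - (2 * \<nu>) *\<^sub>R divM (strain u s) y + divM (\<lambda>y. \<tau> (strain u s y) (vort u s y)) y = 0"
    using sol by (simp add: NS_sol_def)
  then show ?thesis
    by (simp add: divM_outer_trace_free[OF has_derivative_grad_u[OF joint_differentiable] div_free])
qed

lemma u'_apply: "u' t x = A *v u (c * t + m) (transpose A *v x - \<beta> t) + \<gamma> t"
  by (simp add: u'_def)

lemma joint_differentiable_u': "(\<lambda>(s, y). u' s y) differentiable at (t, x)"
  unfolding u'_def by (rule dt_substitution(1)[OF joint_differentiable \<beta> \<gamma>])

lemma grad_u_u': "grad_u u' t y = congruence A (grad_u u (c * t + m) (transpose A *v y - \<beta> t))"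
  unfolding u'_def by (rule grad_u_substitution[OF joint_differentiable])

lemma strain_u': "strain u' t = (\<lambda>y. congruence A (strain u (c * t + m) (transpose A *v y - \<beta> t)))"
  by (rule ext) (rule strain_vort_congruence(1)[OF grad_u_u'])

lemma \<tau>_u': "\<tau> (strain u' t y) (vort u' t y)
    = congruence A (\<tau> (strain u (c * t + m) (transpose A *v y - \<beta> t))
                       (vort u (c * t + m) (transpose A *v y - \<beta> t)))"
  by (simp add: strain_vort_congruence[OF grad_u_u'] \<tau>_congruence)

lemma trace_grad_u_u': "trace (grad_u u' t x) = 0"
  by (simp add: grad_u_u' trace_congruence[OF conformal] div_free)

lemma momentum_u':
  "dt u' t x + divM (\<lambda>y. outer (u' t y)) x + (1 / \<rho>) *\<^sub>R grad (p' t) x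
     - (2 * \<nu>) *\<^sub>R divM (strain u' t) x + divM (\<lambda>y. \<tau> (strain u' t y) (vort u' t y)) x = 0"
proof -
  define t0 z where "t0 = c * t + m" and "z = transpose A *v x - \<beta> t"
  have "dt u' t x = A *v (c *\<^sub>R dt u t0 z - grad_u u t0 z *v (transpose A *v \<gamma> t)) + \<gamma>' t"
    unfolding u'_def t0_def z_def by (rule dt_substitution(2)[OF joint_differentiable \<beta> \<gamma>])
  moreover have "divM (\<lambda>y. outer (u' t y)) x = congruence A (grad_u u t0 z) *v (A *v u t0 z + \<gamma> t)"
    using divM_outer_trace_free[OF has_derivative_grad_u[OF joint_differentiable_u'] trace_grad_u_u']
    by (simp add: grad_u_u' u'_apply t0_def z_def)
  moreover have "grad (p' t) x = c *\<^sub>R (A *v grad (p t0) z) + (- \<rho> *\<^sub>R \<gamma>' t)"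
    unfolding p'_def grad_pressure_substitution(2)[OF pressure_differentiable] t0_def z_def by simp
  moreover have "divM (strain u' t) x = c *\<^sub>R (A *v divM (strain u t0) z)"
    unfolding strain_u' t0_def z_def
    by (rule divM_congruence_substitution(2)[OF conformal strain_differentiable])
  moreover have "divM (\<lambda>y. \<tau> (strain u' t y) (vort u' t y)) x
      = c *\<^sub>R (A *v divM (\<lambda>y. \<tau> (strain u t0 y) (vort u t0 y)) z)"
    unfolding \<tau>_u' t0_def z_def
    by (rule divM_congruence_substitution(2)[OF conformal \<tau>_differentiable])
  ultimately show ?thesis
    using momentum_equation[of t0 z] momentum_residual_congruence[OF conformal rho] by simp
qed

lemma NS_sol_u'_p': "NS_sol \<nu> \<rho> \<tau> u' p'"
  unfolding NS_sol_def
proof (rule allI, rule allI, intro conjI)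
  fix t x
  show "(\<lambda>(s, y). u' s y) differentiable at (t, x)"
    by (rule joint_differentiable_u')
  show "\<forall>i j. (\<lambda>y. strain u' t y $ i $ j) differentiable at x"
    using divM_congruence_substitution(1)[OF conformal strain_differentiable]
    by (simp add: strain_u' mat_differentiable_iff)
  show "\<forall>i j. (\<lambda>y. \<tau> (strain u' t y) (vort u' t y) $ i $ j) differentiable at x"
    using divM_congruence_substitution(1)[OF conformal \<tau>_differentiable]
    by (simp add: \<tau>_u' mat_differentiable_iff)
  show "p' t differentiable at x"
    unfolding p'_def by (rule grad_pressure_substitution(1)[OF pressure_differentiable])
qed (simp_all add: trace_grad_u_u' momentum_u')

end

section \<open>The symmetry groups\<close>

lemma inv_GtI:
  assumes "\<rho> \<noteq> 0"
  shows "inv_Gt \<nu> \<rho> \<tau>"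
  unfolding inv_Gt_def
proof (intro allI impI)
  fix \<epsilon> :: real and u p
  assume "NS_sol \<nu> \<rho> \<tau> u p"
  then interpret NS_conformal_change \<nu> \<rho> \<tau> u p "mat 1" 1 "- \<epsilon>" "\<lambda>_. 0" "\<lambda>_. 0" "\<lambda>_. 0" "\<lambda>_. 0"
    by unfold_locales (simp_all add: assms congruence_def)
  show "NS_sol \<nu> \<rho> \<tau> (\<lambda>t x. u (t - \<epsilon>) x) (\<lambda>t x. p (t - \<epsilon>) x)"
    using NS_sol_u'_p' unfolding u'_def p'_def by simp
qed

lemma inv_GpI:
  assumes "\<rho> \<noteq> 0"
  shows "inv_Gp \<nu> \<rho> \<tau>"
  unfolding inv_Gp_def
proof (intro allI impI)
  fix \<xi> :: "real \<Rightarrow> real" and u p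
  assume "NS_sol \<nu> \<rho> \<tau> u p"
  then interpret NS_conformal_change \<nu> \<rho> \<tau> u p "mat 1" 1 0 "\<lambda>_. 0" "\<lambda>_. 0" "\<lambda>_. 0" \<xi>
    by unfold_locales (simp_all add: assms congruence_def)
  show "NS_sol \<nu> \<rho> \<tau> u (\<lambda>t x. p t x + \<xi> t)"
    using NS_sol_u'_p' unfolding u'_def p'_def by simp
qed

lemma inv_GalI:
  assumes "\<rho> \<noteq> 0"
  shows "inv_Gal \<nu> \<rho> \<tau>"
  unfolding inv_Gal_def
proof (intro allI impI)
  fix \<alpha> \<alpha>' \<alpha>'' :: "real \<Rightarrow> vec3" and u p
  assume "(\<forall>t. (\<alpha> has_vector_derivative \<alpha>' t) (at t))
    \<and> (\<forall>t. (\<alpha>' has_vector_derivative \<alpha>'' t) (at t)) \<and> continuous_on UNIV \<alpha>''"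
    and "NS_sol \<nu> \<rho> \<tau> u p"
  then interpret NS_conformal_change \<nu> \<rho> \<tau> u p "mat 1" 1 0 \<alpha> \<alpha>' \<alpha>'' "\<lambda>s. \<rho> * (\<alpha>'' s \<bullet> \<alpha> s)"
    by unfold_locales (simp_all add: assms congruence_def)
  show "NS_sol \<nu> \<rho> \<tau> (\<lambda>t x. u t (x - \<alpha> t) + \<alpha>' t)
      (\<lambda>t x. p t (x - \<alpha> t) - \<rho> * (\<alpha>'' t \<bullet> (x - \<alpha> t)))"
    using NS_sol_u'_p' unfolding u'_def p'_def by (simp add: inner_diff_right algebra_simps)
qed

lemma inv_SO3I:
  assumes "\<rho> \<noteq> 0"
    and "\<And>R S W. orthogonal_matrix R
      \<Longrightarrow> \<tau> (congruence R S) (congruence R W) = congruence R (\<tau> S W)"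
  shows "inv_SO3 \<nu> \<rho> \<tau>"
  unfolding inv_SO3_def
proof (intro allI impI)
  fix R :: mat3 and u p
  assume "R ** transpose R = mat 1 \<and> det R = 1" and "NS_sol \<nu> \<rho> \<tau> u p"
  moreover from this have "orthogonal_matrix R"
    by (simp add: orthogonal_matrix_def matrix_left_right_inverse)
  ultimately interpret NS_conformal_change \<nu> \<rho> \<tau> u p R 1 0 "\<lambda>_. 0" "\<lambda>_. 0" "\<lambda>_. 0" "\<lambda>_. 0"
    by unfold_locales (simp_all add: assms orthogonal_matrix_def)
  show "NS_sol \<nu> \<rho> \<tau> (\<lambda>t x. R *v u t (transpose R *v x)) (\<lambda>t x. p t (transpose R *v x))"
    using NS_sol_u'_p' unfolding u'_def p'_def by simp
qed

lemma inv_GsI: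
  assumes "\<rho> \<noteq> 0"
    and "\<And>c S W. c > 0 \<Longrightarrow> \<tau> (c *\<^sub>R S) (c *\<^sub>R W) = c *\<^sub>R \<tau> S W"
  shows "inv_Gs \<nu> \<rho> \<tau>"
  unfolding inv_Gs_def
proof (intro allI impI)
  fix \<epsilon> :: real and u p
  assume "NS_sol \<nu> \<rho> \<tau> u p"
  moreover have "exp (- \<epsilon>) * exp (- \<epsilon>) = exp (-2 * \<epsilon>)"
    by (simp flip: exp_add)
  ultimately interpret NS_conformal_change \<nu> \<rho> \<tau> u p "mat (exp (- \<epsilon>))" "exp (-2 * \<epsilon>)" 0
      "\<lambda>_. 0" "\<lambda>_. 0" "\<lambda>_. 0" "\<lambda>_. 0"
    by unfold_locales (simp_all add: assms congruence_mat matrix_mul_mat_mat)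
  show "NS_sol \<nu> \<rho> \<tau> (\<lambda>t x. exp (- \<epsilon>) *\<^sub>R u (exp (-2 * \<epsilon>) * t) (exp (- \<epsilon>) *\<^sub>R x))
      (\<lambda>t x. exp (-2 * \<epsilon>) * p (exp (-2 * \<epsilon>) * t) (exp (- \<epsilon>) *\<^sub>R x))"
    using NS_sol_u'_p' unfolding u'_def p'_def by (simp add: matrix_vector_mul_mat)
qed

theorem theorem2:
  fixes \<nu> \<rho> :: real and a1 a2 a3 a4 a5 a6 a7 :: coeff
  assumes "\<nu> > 0" and "\<rho> > 0"
  shows "inv_Gt \<nu> \<rho> (tau_model a1 a2 a3 a4 a5 a6 a7)
       \<and> inv_Gal \<nu> \<rho> (tau_model a1 a2 a3 a4 a5 a6 a7)
       \<and> inv_SO3 \<nu> \<rho> (tau_model a1 a2 a3 a4 a5 a6 a7)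
       \<and> inv_Gp \<nu> \<rho> (tau_model a1 a2 a3 a4 a5 a6 a7)
       \<and> inv_Gs \<nu> \<rho> (tau_model a1 a2 a3 a4 a5 a6 a7)"
proof -
  have "\<rho> \<noteq> 0"
    using assms(2) by simp
  then show ?thesis
    by (intro conjI inv_GtI inv_GalI inv_SO3I inv_GpI inv_GsI
        tau_model_orthogonal_congruence tau_model_scaleR)
qed

end
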